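(* Let $f:(0,\infty)\to(0,\infty)$ be a $C^\infty(0,\infty)$-function such that $f'$ is a Bernstein function and $f^{(n)}(x)\neq0$ for all $x>0$ and $n\in\mathbb{N}$. Then its inverse $f^{-1}$ is a Bernstein function with $(f^{-1})^{(n)}(x)\neq0$ for all $x>0$ and $n\in\mathbb{N}$.
   Context: A Bernstein function is a non-negative function $g$ of class $C^\infty(0,\infty)$ with $(-1)^{n-1}g^{(n)}(x)\ge0$ for all $n\in\mathbb{N}$ and $x>0$. (Under the hypotheses $f'>0$, so $f$ is strictly increasing and invertible onto its image.) *)

theory Defs
  imports "HOL-Analysis.Analysis"
begin

definition smooth_on :: "real set \<Rightarrow> (real \<Rightarrow> real) \<Rightarrow> bool" where
  "smooth_on S g \<longleftrightarrow>
     (\<forall>n x. x \<in> S \<longrightarrow> ((deriv ^^ n) g has_real_derivative (deriv ^^ Suc n) g x) (at x))"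

definition bernstein_on :: "real set \<Rightarrow> (real \<Rightarrow> real) \<Rightarrow> bool" where
  "bernstein_on S g \<longleftrightarrow> smooth_on S g \<and> (\<forall>x\<in>S. 0 \<le> g x) \<and>
     (\<forall>n::nat. n \<ge> 1 \<longrightarrow> (\<forall>x\<in>S. 0 \<le> (-1) ^ (n - 1) * (deriv ^^ n) g x))"

definition bernstein :: "(real \<Rightarrow> real) \<Rightarrow> bool" where
  "bernstein g \<longleftrightarrow> bernstein_on {0<..} g"

end

theory Submission
  imports Defs
begin

text \<open>
  Say that w alternates on S if (-1)^k w^(k) > 0 on S for every k; alternating_signs_on p n S w
  asks this only for k < n and with sign (-1)^(k+p). The hypotheses say exactly that f''
  alternates, and the conclusion says exactly that g' alternates, where g is the inverse of f.

  By the Leibniz rule, products of alternating functions alternate. Since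
  (\<phi> \<circ> u)' = (\<phi>' \<circ> u) u', it follows by induction that \<phi> \<circ> u alternates up to order n + 1
  whenever \<phi> alternates and u' alternates up to order n. With \<phi> = 1/t and u = f' this shows
  that 1/f' alternates. Finally g' = (1/f') \<circ> g, so the same lemma with u = g lifts the
  alternation of g' one order at a time; the smoothness of g is bootstrapped in the same way.
\<close>

definition higher_differentiable_on :: "nat \<Rightarrow> real set \<Rightarrow> (real \<Rightarrow> real) \<Rightarrow> bool" where
  "higher_differentiable_on n S w \<longleftrightarrow>
     (\<forall>k<n. \<forall>x\<in>S. ((deriv ^^ k) w has_real_derivative (deriv ^^ Suc k) w x) (at x))"

lemma higher_deriv_Suc_right: "(deriv ^^ Suc k) w = (deriv ^^ k) (deriv w)"
  by (simp only: funpow_Suc_right o_apply)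

lemma higher_differentiable_on_Suc:
  "higher_differentiable_on (Suc n) S w \<longleftrightarrow>
     (\<forall>x\<in>S. w field_differentiable at x) \<and> higher_differentiable_on n S (deriv w)"
  unfolding higher_differentiable_on_def All_less_Suc2 higher_deriv_Suc_right[symmetric]
  by (simp add: DERIV_deriv_iff_field_differentiable)

lemma higher_differentiable_on_mono:
  "higher_differentiable_on n S w \<Longrightarrow> m \<le> n \<Longrightarrow> higher_differentiable_on m S w"
  unfolding higher_differentiable_on_def using order.strict_trans2 by blast

lemma smooth_on_iff_higher_differentiable_on:
  "smooth_on S w \<longleftrightarrow> (\<forall>n. higher_differentiable_on n S w)"
proof
  assume "\<forall>n. higher_differentiable_on n S w"
  then have "higher_differentiable_on (Suc n) S w" for n
    by blast
  then show "smooth_on S w"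
    unfolding smooth_on_def higher_differentiable_on_def by blast
qed (auto simp: smooth_on_def higher_differentiable_on_def)

lemma smooth_on_iff_deriv:
  "smooth_on S w \<longleftrightarrow> (\<forall>x\<in>S. w field_differentiable at x) \<and> smooth_on S (deriv w)"
proof -
  have "(\<forall>n. higher_differentiable_on n S w) \<longleftrightarrow> (\<forall>n. higher_differentiable_on (Suc n) S w)"
    using higher_differentiable_on_mono le_SucI by blast
  then show ?thesis
    unfolding smooth_on_iff_higher_differentiable_on higher_differentiable_on_Suc by blast
qed

lemma higher_deriv_cong_open:
  assumes "open S" "\<And>y. y \<in> S \<Longrightarrow> v y = w y" "x \<in> S"
  shows "(deriv ^^ k) v x = (deriv ^^ k) w x"
  by (rule higher_deriv_cong_ev[OF eventually_mono[OF eventually_nhds_in_open]]) (use assms in auto)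

lemma higher_differentiable_on_cong:
  assumes v: "higher_differentiable_on n S v" and S: "open S" and eq: "\<And>y. y \<in> S \<Longrightarrow> v y = w y"
  shows "higher_differentiable_on n S w"
  unfolding higher_differentiable_on_def
proof (intro allI impI ballI)
  fix k x assume "k < n" and x: "x \<in> S"
  with v have "((deriv ^^ k) v has_real_derivative (deriv ^^ Suc k) v x) (at x)"
    unfolding higher_differentiable_on_def by blast
  then have "((deriv ^^ k) v has_real_derivative (deriv ^^ Suc k) w x) (at x)"
    by (simp only: higher_deriv_cong_open[OF S eq x])
  then show "((deriv ^^ k) w has_real_derivative (deriv ^^ Suc k) w x) (at x)"
    by (rule has_field_derivative_transform_within_open[OF _ S x])
       (rule higher_deriv_cong_open[OF S eq])
qed

lemma higher_differentiable_on_add: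
  assumes "open S"
  shows "higher_differentiable_on n S v \<Longrightarrow> higher_differentiable_on n S w \<Longrightarrow>
    higher_differentiable_on n S (\<lambda>x. v x + w x)"
proof (induction n arbitrary: v w)
  case 0
  then show ?case by (simp add: higher_differentiable_on_def)
next
  case (Suc n)
  then have v: "\<forall>x\<in>S. v field_differentiable at x" and w: "\<forall>x\<in>S. w field_differentiable at x"
    by (simp_all add: higher_differentiable_on_Suc)
  have "higher_differentiable_on n S (\<lambda>x. deriv v x + deriv w x)"
    using Suc by (simp add: higher_differentiable_on_Suc)
  then have "higher_differentiable_on n S (deriv (\<lambda>x. v x + w x))"
    by (rule higher_differentiable_on_cong[OF _ assms]) (simp add: v w)
  then show ?case
    using v w by (simp add: higher_differentiable_on_Suc field_differentiable_add)
qed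

lemma higher_differentiable_on_mult:
  assumes "open S"
  shows "higher_differentiable_on n S a \<Longrightarrow> higher_differentiable_on n S b \<Longrightarrow>
    higher_differentiable_on n S (\<lambda>x. a x * b x)"
proof (induction n arbitrary: a b)
  case 0
  then show ?case by (simp add: higher_differentiable_on_def)
next
  case (Suc n)
  then have a: "\<forall>x\<in>S. a field_differentiable at x" and b: "\<forall>x\<in>S. b field_differentiable at x"
    by (simp_all add: higher_differentiable_on_Suc)
  have "higher_differentiable_on n S (\<lambda>x. a x * deriv b x + deriv a x * b x)"
    using Suc higher_differentiable_on_mono[of "Suc n" S]
    by (auto simp: higher_differentiable_on_Suc intro!: higher_differentiable_on_add[OF assms])
  then have "higher_differentiable_on n S (deriv (\<lambda>x. a x * b x))"
    by (rule higher_differentiable_on_cong[OF _ assms]) (simp add: a b)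
  then show ?case
    using a b by (simp add: higher_differentiable_on_Suc field_differentiable_mult)
qed

lemma higher_differentiable_on_compose:
  assumes "open S" "\<forall>x\<in>S. u x \<in> J"
  shows "higher_differentiable_on n S u \<Longrightarrow> higher_differentiable_on n J \<phi> \<Longrightarrow>
    higher_differentiable_on n S (\<lambda>x. \<phi> (u x))"
proof (induction n arbitrary: \<phi>)
  case 0
  then show ?case by (simp add: higher_differentiable_on_def)
next
  case (Suc n)
  then have u: "\<forall>x\<in>S. u field_differentiable at x"
    and \<phi>: "\<forall>x\<in>S. \<phi> field_differentiable at (u x)"
    using assms(2) by (simp_all add: higher_differentiable_on_Suc)
  have "higher_differentiable_on n S (\<lambda>x. deriv \<phi> (u x) * deriv u x)"
    using Suc higher_differentiable_on_mono[of "Suc n" S]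
    by (auto simp: higher_differentiable_on_Suc intro!: higher_differentiable_on_mult[OF assms(1)])
  then have "higher_differentiable_on n S (deriv (\<lambda>x. \<phi> (u x)))"
    by (rule higher_differentiable_on_cong[OF _ assms(1)])
       (simp add: u \<phi> deriv_chain[unfolded comp_def])
  then show ?case
    using u \<phi> by (simp add: higher_differentiable_on_Suc field_differentiable_compose[unfolded comp_def])
qed

lemma smooth_on_mult:
  "open S \<Longrightarrow> smooth_on S a \<Longrightarrow> smooth_on S b \<Longrightarrow> smooth_on S (\<lambda>x. a x * b x)"
  by (simp add: smooth_on_iff_higher_differentiable_on higher_differentiable_on_mult)

lemma smooth_on_compose:
  "open S \<Longrightarrow> \<forall>x\<in>S. u x \<in> J \<Longrightarrow> smooth_on S u \<Longrightarrow> smooth_on J \<phi> \<Longrightarrow>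
    smooth_on S (\<lambda>x. \<phi> (u x))"
  by (simp add: smooth_on_iff_higher_differentiable_on higher_differentiable_on_compose)

definition alternating_signs_on :: "nat \<Rightarrow> nat \<Rightarrow> real set \<Rightarrow> (real \<Rightarrow> real) \<Rightarrow> bool" where
  "alternating_signs_on p n S w \<longleftrightarrow> (\<forall>k<n. \<forall>x\<in>S. 0 < (-1) ^ (k + p) * (deriv ^^ k) w x)"

lemma alternating_signs_on_Suc:
  "alternating_signs_on p (Suc n) S w \<longleftrightarrow>
     (\<forall>x\<in>S. 0 < (-1) ^ p * w x) \<and> alternating_signs_on (Suc p) n S (deriv w)"
  unfolding alternating_signs_on_def All_less_Suc2 higher_deriv_Suc_right[symmetric] by simp

lemma alternating_signs_on_mono:
  "alternating_signs_on p n S w \<Longrightarrow> m \<le> n \<Longrightarrow> alternating_signs_on p m S w"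
  unfolding alternating_signs_on_def by auto

lemma alternating_signs_on_cong:
  "alternating_signs_on p n S v \<Longrightarrow> open S \<Longrightarrow> (\<And>y. y \<in> S \<Longrightarrow> v y = w y) \<Longrightarrow>
    alternating_signs_on p n S w"
  unfolding alternating_signs_on_def by (metis higher_deriv_cong_open)

lemma alternating_signs_on_add:
  assumes "open S"
  shows "smooth_on S v \<Longrightarrow> smooth_on S w \<Longrightarrow> alternating_signs_on p n S v \<Longrightarrow>
    alternating_signs_on p n S w \<Longrightarrow> alternating_signs_on p n S (\<lambda>x. v x + w x)"
proof (induction n arbitrary: p v w)
  case 0
  then show ?case by (simp add: alternating_signs_on_def)
next
  case (Suc n)
  have v: "\<forall>x\<in>S. v field_differentiable at x" "smooth_on S (deriv v)"
    and w: "\<forall>x\<in>S. w field_differentiable at x" "smooth_on S (deriv w)"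
    using Suc.prems(1,2) smooth_on_iff_deriv by blast+
  have "alternating_signs_on (Suc p) n S (\<lambda>x. deriv v x + deriv w x)"
    using Suc.prems(3,4) unfolding alternating_signs_on_Suc by (blast intro: Suc.IH v(2) w(2))
  then have "alternating_signs_on (Suc p) n S (deriv (\<lambda>x. v x + w x))"
    by (rule alternating_signs_on_cong[OF _ assms]) (simp add: v w)
  moreover have "0 < (-1) ^ p * (v x + w x)" if "x \<in> S" for x
    using Suc.prems(3,4) that unfolding alternating_signs_on_Suc distrib_left by (simp add: add_pos_pos)
  ultimately show ?case
    by (simp add: alternating_signs_on_Suc)
qed

lemma alternating_signs_on_mult:
  assumes "open S"
  shows "smooth_on S a \<Longrightarrow> smooth_on S b \<Longrightarrow> alternating_signs_on p n S a \<Longrightarrow>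
    alternating_signs_on q n S b \<Longrightarrow> alternating_signs_on (p + q) n S (\<lambda>x. a x * b x)"
proof (induction n arbitrary: p q a b)
  case 0
  then show ?case by (simp add: alternating_signs_on_def)
next
  case (Suc n)
  have a: "\<forall>x\<in>S. a field_differentiable at x" "smooth_on S (deriv a)"
    and b: "\<forall>x\<in>S. b field_differentiable at x" "smooth_on S (deriv b)"
    using Suc.prems(1,2) smooth_on_iff_deriv by blast+
  have "alternating_signs_on p n S a" "alternating_signs_on (Suc p) n S (deriv a)"
    and "alternating_signs_on q n S b" "alternating_signs_on (Suc q) n S (deriv b)"
    using Suc.prems(3,4) alternating_signs_on_mono[OF _ le_SucI] alternating_signs_on_Suc
    by blast+
  then have "alternating_signs_on (p + Suc q) n S (\<lambda>x. a x * deriv b x)"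
    and "alternating_signs_on (Suc p + q) n S (\<lambda>x. deriv a x * b x)"
    using Suc.IH Suc.prems(1,2) a(2) b(2) by blast+
  then have "alternating_signs_on (Suc (p + q)) n S (\<lambda>x. a x * deriv b x + deriv a x * b x)"
    using Suc.prems(1,2) a(2) b(2)
    by (intro alternating_signs_on_add[OF assms] smooth_on_mult[OF assms]) simp_all
  then have "alternating_signs_on (Suc (p + q)) n S (deriv (\<lambda>x. a x * b x))"
    by (rule alternating_signs_on_cong[OF _ assms]) (simp add: a b)
  moreover have "0 < (-1) ^ (p + q) * (a x * b x)" if "x \<in> S" for x
  proof -
    have "0 < ((-1) ^ p * a x) * ((-1) ^ q * b x)"
      using Suc.prems(3,4) that unfolding alternating_signs_on_Suc by simp
    then show ?thesis
      by (simp add: power_add mult_ac)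
  qed
  ultimately show ?case
    by (simp add: alternating_signs_on_Suc)
qed

lemma alternating_signs_on_compose:
  assumes "open S" and u_into: "\<forall>x\<in>S. u x \<in> J"
  shows "smooth_on S u \<Longrightarrow> smooth_on J \<phi> \<Longrightarrow> alternating_signs_on p (Suc n) J \<phi> \<Longrightarrow>
    alternating_signs_on 0 n S (deriv u) \<Longrightarrow> alternating_signs_on p (Suc n) S (\<lambda>x. \<phi> (u x))"
proof (induction n arbitrary: p \<phi>)
  case 0
  then show ?case using u_into by (simp add: alternating_signs_on_def)
next
  case (Suc n)
  have u: "\<forall>x\<in>S. u field_differentiable at x" "smooth_on S (deriv u)"
    and \<phi>: "\<forall>x\<in>S. \<phi> field_differentiable at (u x)" "smooth_on J (deriv \<phi>)"
    using Suc.prems(1,2) u_into smooth_on_iff_deriv by blast+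
  have "alternating_signs_on (Suc p) (Suc n) J (deriv \<phi>)" "alternating_signs_on 0 n S (deriv u)"
    using Suc.prems(3,4) alternating_signs_on_mono[OF _ le_SucI] alternating_signs_on_Suc
    by blast+
  then have "alternating_signs_on (Suc p) (Suc n) S (\<lambda>x. deriv \<phi> (u x))"
    by (rule Suc.IH[OF Suc.prems(1) \<phi>(2)])
  from alternating_signs_on_mult[OF assms(1) smooth_on_compose[OF assms Suc.prems(1) \<phi>(2)] u(2)
      this Suc.prems(4)]
  have "alternating_signs_on (Suc p) (Suc n) S (\<lambda>x. deriv \<phi> (u x) * deriv u x)"
    by simp
  then have "alternating_signs_on (Suc p) (Suc n) S (deriv (\<lambda>x. \<phi> (u x)))"
    by (rule alternating_signs_on_cong[OF _ assms(1)]) (simp add: u \<phi> deriv_chain[unfolded comp_def])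
  moreover have "0 < (-1) ^ p * \<phi> (u x)" if "x \<in> S" for x
    using Suc.prems(3) u_into that unfolding alternating_signs_on_Suc by blast
  ultimately show ?case
    by (simp add: alternating_signs_on_Suc[of p "Suc n"])
qed

lemma alternating_signs_on_all_iff:
  "(\<forall>n. alternating_signs_on p n S w) \<longleftrightarrow> (\<forall>k. \<forall>x\<in>S. 0 < (-1) ^ (k + p) * (deriv ^^ k) w x)"
  unfolding alternating_signs_on_def by (blast intro: lessI)

lemma bernstein_on_nonvanishing_iff:
  "bernstein_on S g \<and> (\<forall>n\<ge>1. \<forall>x\<in>S. (deriv ^^ n) g x \<noteq> 0) \<longleftrightarrow>
     smooth_on S g \<and> (\<forall>x\<in>S. 0 \<le> g x) \<and> (\<forall>n. alternating_signs_on 0 n S (deriv g))"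
proof -
  have reindex: "(\<forall>n\<ge>1. P n) \<longleftrightarrow> (\<forall>k. P (Suc k))" for P :: "nat \<Rightarrow> bool"
  proof
    assume "\<forall>k. P (Suc k)"
    then show "\<forall>n\<ge>1. P n"
      by (metis One_nat_def Suc_le_D)
  qed simp
  have sign: "0 \<le> (-1) ^ k * X \<and> X \<noteq> 0 \<longleftrightarrow> 0 < (-1) ^ (k + 0) * X" for k and X :: real
    using less_le[of 0 "(-1) ^ k * X"] by simp
  have signs: "(\<forall>n\<ge>1. \<forall>x\<in>S. 0 \<le> (-1) ^ (n - 1) * (deriv ^^ n) g x) \<and> (\<forall>n\<ge>1. \<forall>x\<in>S. (deriv ^^ n) g x \<noteq> 0)
      \<longleftrightarrow> (\<forall>k. \<forall>x\<in>S. 0 < (-1) ^ (k + 0) * (deriv ^^ k) (deriv g) x)"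
    unfolding reindex higher_deriv_Suc_right diff_Suc_1 sign[symmetric] ball_conj_distrib all_conj_distrib ..
  show ?thesis
    unfolding bernstein_on_def alternating_signs_on_all_iff signs[symmetric] by (simp only: conj_assoc)
qed

lemma has_real_derivative_reciprocal_power:
  fixes t :: real
  assumes "t \<noteq> 0"
  shows "((\<lambda>s. (-1) ^ k * fact k / s ^ Suc k) has_real_derivative
    (-1) ^ Suc k * fact (Suc k) / t ^ Suc (Suc k)) (at t)"
proof -
  have "((\<lambda>s. s ^ Suc k) has_real_derivative real (Suc k) * t ^ k) (at t)"
    using DERIV_pow[of "Suc k" t] by simp
  from DERIV_quotient[OF DERIV_const this, of "(-1) ^ k * fact k"]
  have "((\<lambda>s. (-1) ^ k * fact k / s ^ Suc k) has_real_derivative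
      (0 * t ^ Suc k - real (Suc k) * t ^ k * ((-1) ^ k * fact k)) / (t ^ Suc k) ^ Suc (Suc 0)) (at t)"
    using assms by simp
  also have "(0 * t ^ Suc k - real (Suc k) * t ^ k * ((-1) ^ k * fact k)) / (t ^ Suc k) ^ Suc (Suc 0) =
      (-1) ^ Suc k * fact (Suc k) / t ^ Suc (Suc k)"
    using assms by (simp add: field_simps)
  finally show ?thesis .
qed

lemma higher_deriv_inverse:
  fixes t :: real
  assumes "0 < t"
  shows "(deriv ^^ k) inverse t = (-1) ^ k * fact k / t ^ Suc k"
  using assms
proof (induction k arbitrary: t)
  case 0
  then show ?case by (simp add: divide_inverse)
next
  case (Suc k)
  have "(deriv ^^ Suc k) inverse t = deriv (\<lambda>s. (-1) ^ k * fact k / s ^ Suc k) t"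
    unfolding funpow.simps o_apply
    by (rule deriv_cong_ev[OF eventually_mono[OF eventually_nhds_in_open[of "{0<..}"]]])
       (use Suc in auto)
  also have "\<dots> = (-1) ^ Suc k * fact (Suc k) / t ^ Suc (Suc k)"
    using Suc.prems by (intro DERIV_imp_deriv has_real_derivative_reciprocal_power) simp
  finally show ?case .
qed

lemma smooth_on_inverse: "smooth_on {0<..} inverse"
  unfolding smooth_on_def
proof (intro allI impI)
  fix n and t :: real assume t: "t \<in> {0<..}"
  then have "((\<lambda>s. (-1) ^ n * fact n / s ^ Suc n) has_real_derivative (deriv ^^ Suc n) inverse t) (at t)"
    using has_real_derivative_reciprocal_power[of t n] higher_deriv_inverse[of t "Suc n"] by simp
  then show "((deriv ^^ n) inverse has_real_derivative (deriv ^^ Suc n) inverse t) (at t)"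
    by (rule has_field_derivative_transform_within_open[OF _ open_greaterThan t])
       (simp add: higher_deriv_inverse)
qed

lemma alternating_signs_on_inverse: "alternating_signs_on 0 n {0<..} inverse"
  unfolding alternating_signs_on_def
proof (intro allI impI ballI)
  fix k and t :: real assume "t \<in> {0<..}"
  then have "(-1) ^ (k + 0) * (deriv ^^ k) inverse t = fact k / t ^ Suc k"
    by (simp add: higher_deriv_inverse flip: power_add)
  also have "\<dots> > 0"
    using \<open>t \<in> {0<..}\<close> by simp
  finally show "0 < (-1) ^ (k + 0) * (deriv ^^ k) inverse t" .
qed

lemma smooth_on_reciprocal:
  assumes "open S" "smooth_on S h" "\<forall>x\<in>S. 0 < h x"
  shows "smooth_on S (\<lambda>x. inverse (h x))"
  using smooth_on_compose[OF assms(1) _ assms(2) smooth_on_inverse] assms(3) by simp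

lemma alternating_signs_on_reciprocal:
  assumes "open S" "smooth_on S h" "\<forall>x\<in>S. 0 < h x" "\<And>n. alternating_signs_on 0 n S (deriv h)"
  shows "alternating_signs_on 0 n S (\<lambda>x. inverse (h x))"
proof -
  have "\<forall>x\<in>S. h x \<in> {0<..}"
    using assms(3) by simp
  from alternating_signs_on_compose[where n = n, OF assms(1) this assms(2) smooth_on_inverse
      alternating_signs_on_inverse assms(4)]
  show ?thesis
    by (rule alternating_signs_on_mono) simp
qed

lemma strict_mono_on_if_deriv_pos:
  assumes "is_interval S" and f': "\<And>x. x \<in> S \<Longrightarrow> (f has_real_derivative f' x) (at x)"
    and pos: "\<And>x. x \<in> S \<Longrightarrow> 0 < f' x"
  shows "strict_mono_on S f"
proof (rule strict_mono_onI)
  fix x y assume "x \<in> S" "y \<in> S" "x < y"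
  show "f x < f y"
  proof (rule DERIV_pos_imp_increasing[OF \<open>x < y\<close>])
    fix z assume "x \<le> z" "z \<le> y"
    with \<open>x \<in> S\<close> \<open>y \<in> S\<close> have "z \<in> S"
      using mem_is_interval_1_I[OF assms(1)] by blast
    with f' pos show "\<exists>D. (f has_real_derivative D) (at z) \<and> 0 < D"
      by blast
  qed
qed

lemma open_image_if_deriv_pos:
  assumes "open S" "is_interval S" and f': "\<And>x. x \<in> S \<Longrightarrow> (f has_real_derivative f' x) (at x)"
    and "\<And>x. x \<in> S \<Longrightarrow> 0 < f' x"
  shows "open (f ` S)"
proof -
  have "continuous_on S f"
    using f' by (rule has_real_derivative_imp_continuous_on)
  moreover have "inj_on f S"
    using strict_mono_on_if_deriv_pos[OF assms(2-4)] by (rule strict_mono_on_imp_inj_on)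
  ultimately show ?thesis
    using injective_into_1d_imp_open_map_UNIV[OF assms(1)] by blast
qed

lemma has_real_derivative_inv_into_if_deriv_pos:
  assumes S: "open S" "is_interval S" and f': "\<And>x. x \<in> S \<Longrightarrow> (f has_real_derivative f' x) (at x)"
    and pos: "\<And>x. x \<in> S \<Longrightarrow> 0 < f' x" and y: "y \<in> f ` S"
  shows "(inv_into S f has_real_derivative inverse (f' (inv_into S f y))) (at y)"
proof -
  let ?x = "inv_into S f y"
  have inj: "inj_on f S"
    using strict_mono_on_if_deriv_pos[OF S(2) f' pos] by (rule strict_mono_on_imp_inj_on)
  have x: "?x \<in> S"
    using y by (rule inv_into_into)
  have cont: "continuous_on S f"
    using f' by (rule has_real_derivative_imp_continuous_on)
  show ?thesis
    unfolding has_field_derivative_def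
  proof (rule has_derivative_inverse_strong_x[where g = "inv_into S f" and y = y, OF S(1) x cont])
    show "inv_into S f (f z) = z" if "z \<in> S" for z
      using inj that by (rule inv_into_f_f)
    show "(f has_derivative (*) (f' ?x)) (at ?x)"
      using f'[OF x] by (simp add: has_field_derivative_def)
    show "(*) (f' ?x) \<circ> (*) (inverse (f' ?x)) = id"
      using pos[OF x] by (simp add: fun_eq_iff)
    show "f ?x = y"
      using y by (rule f_inv_into_f)
  qed
qed

lemma smooth_on_ode_solution:
  assumes T: "open T" and g_into: "\<forall>y\<in>T. g y \<in> S"
    and g': "\<And>y. y \<in> T \<Longrightarrow> (g has_real_derivative \<phi> (g y)) (at y)" and \<phi>: "smooth_on S \<phi>"
  shows "smooth_on T g"
  unfolding smooth_on_iff_higher_differentiable_on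
proof
  fix n show "higher_differentiable_on n T g"
  proof (induction n)
    case 0
    show ?case by (simp add: higher_differentiable_on_def)
  next
    case (Suc n)
    have "higher_differentiable_on n T (\<lambda>y. \<phi> (g y))"
      using higher_differentiable_on_compose[OF T g_into Suc.IH] \<phi>
      by (simp add: smooth_on_iff_higher_differentiable_on)
    then have "higher_differentiable_on n T (deriv g)"
      by (rule higher_differentiable_on_cong[OF _ T]) (metis DERIV_imp_deriv g')
    moreover have "\<forall>y\<in>T. g field_differentiable at y"
      using g' field_differentiable_def by blast
    ultimately show ?case
      by (simp add: higher_differentiable_on_Suc)
  qed
qed

lemma alternating_signs_on_ode_solution:
  assumes T: "open T" and g_into: "\<forall>y\<in>T. g y \<in> S"
    and g': "\<And>y. y \<in> T \<Longrightarrow> (g has_real_derivative \<phi> (g y)) (at y)" and \<phi>: "smooth_on S \<phi>"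
    and \<phi>_alt: "\<And>n. alternating_signs_on 0 n S \<phi>"
  shows "alternating_signs_on 0 n T (deriv g)"
proof (induction n)
  case 0
  show ?case by (simp add: alternating_signs_on_def)
next
  case (Suc n)
  have "alternating_signs_on 0 (Suc n) T (\<lambda>y. \<phi> (g y))"
    by (rule alternating_signs_on_compose[OF T g_into smooth_on_ode_solution[OF T g_into g' \<phi>]
          \<phi> \<phi>_alt Suc.IH])
  then show ?case
    by (rule alternating_signs_on_cong[OF _ T]) (metis DERIV_imp_deriv g')
qed

theorem lemma4p1:
  fixes f :: "real \<Rightarrow> real"
  assumes "f ` {0<..} \<subseteq> {0<..}"
    and "smooth_on {0<..} f"
    and "bernstein (deriv f)"
    and "\<forall>n::nat. n \<ge> 1 \<longrightarrow> (\<forall>x>0. (deriv ^^ n) f x \<noteq> 0)"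
  shows "bernstein_on (f ` {0<..}) (inv_into {0<..} f) \<and>
    (\<forall>n::nat. n \<ge> 1 \<longrightarrow> (\<forall>y \<in> f ` {0<..}. (deriv ^^ n) (inv_into {0<..} f) y \<noteq> 0))"
proof -
  let ?S = "{0<..} :: real set" and ?g = "inv_into {0<..} f"
  have "\<forall>n\<ge>1. \<forall>x\<in>?S. (deriv ^^ n) (deriv f) x \<noteq> 0"
    using assms(4) by (simp add: higher_deriv_Suc_right[symmetric] del: funpow.simps)
  then have f': "smooth_on ?S (deriv f)" "\<forall>x\<in>?S. 0 \<le> deriv f x"
    and f''_alt: "\<And>n. alternating_signs_on 0 n ?S (deriv (deriv f))"
    using assms(3) bernstein_on_nonvanishing_iff[of ?S "deriv f"] unfolding bernstein_def by blast+
  have f'_pos: "\<forall>x\<in>?S. 0 < deriv f x"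
    using f'(2) assms(4)[rule_format, of 1] by force
  have df: "(f has_real_derivative deriv f x) (at x)" if "x \<in> ?S" for x
    using assms(2) that smooth_on_iff_deriv DERIV_deriv_iff_field_differentiable by blast
  have inverse_function:
    "open (f ` ?S)" "\<And>y. y \<in> f ` ?S \<Longrightarrow> (?g has_real_derivative inverse (deriv f (?g y))) (at y)"
    using open_image_if_deriv_pos[OF open_greaterThan is_interval_oi df f'_pos[rule_format]]
      has_real_derivative_inv_into_if_deriv_pos[OF open_greaterThan is_interval_oi df f'_pos[rule_format]]
    by blast+
  have g_into: "\<forall>y\<in>f ` ?S. ?g y \<in> ?S"
    by (intro ballI inv_into_into)
  have "smooth_on (f ` ?S) ?g"
    by (rule smooth_on_ode_solution[OF inverse_function(1) g_into inverse_function(2)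
          smooth_on_reciprocal[OF open_greaterThan f'(1) f'_pos]])
  moreover have "alternating_signs_on 0 n (f ` ?S) (deriv ?g)" for n
    by (rule alternating_signs_on_ode_solution[OF inverse_function(1) g_into inverse_function(2)
          smooth_on_reciprocal[OF open_greaterThan f'(1) f'_pos]
          alternating_signs_on_reciprocal[OF open_greaterThan f'(1) f'_pos f''_alt]])
  moreover have "\<forall>y\<in>f ` ?S. 0 \<le> ?g y"
    using g_into by (simp add: less_imp_le)
  ultimately show ?thesis
    using bernstein_on_nonvanishing_iff[of "f ` ?S" ?g] by blast
qed

end
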